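(* Let $n\ge 2$ and $\sigma,\tau\in S_n$. Put $i=\sigma^{-1}(n-1)$, $j=\tau^{-1}(n-1)$, $a=\tau(i)$, $b=\sigma(j)$, $c=\sigma(n-1)$, $e=\tau(n-1)$, and $\Delta=\mathrm{hd}(\sigma,\tau)-\mathrm{hd}(\sigma^{\sf CT},\tau^{\sf CT})$. Then: (0) $\Delta=0$ if and only if one of the following holds: (1) $i,j,n-1$ pairwise distinct, $a\neq b$ and $c=e$; (2) $i,j,n-1$ pairwise distinct, $a=b$ and $c=e$; (3) $i=j\neq n-1$, $a=b=n-1$, $c\neq e$; (4) $i=j\neq n-1$, $a=b=n-1$, $c=e$; (5) $i=j=n-1$ and $a=b=c=e=n-1$. (I) $\Delta=1$ if and only if one of the following holds: (6) $i,j,n-1$ pairwise distinct and $a,b,c,e$ pairwise distinct; (7) $i,j,n-1$ pairwise distinct, $a=b$, $c\neq e$; (8) $i=n-1\neq j$, $a=e$, $c=n-1$, and $a,b,n-1$ pairwise distinct; (9) $j=n-1\neq i$, $b=c$, $e=n-1$, and $a,b,n-1$ pairwise distinct. (II) $\Delta=2$ if and only if one of the following holds: (10) $i,j,n-1$ pairwise distinct, $a=c$, $b\neq e$; (11) $i,j,n-1$ pairwise distinct, $a\neq c$, $b=e$; (12) $i=n-1\neq j$ and $a=b=e\neq c=n-1$; (13) $j=n-1\neq i$ and $a=b=c\neq e=n-1$. (III) $\Delta=3$ if and only if (14) $i,j,n-1$ are pairwise distinct, $a=c$ and $b=e$.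
   Context: $S_n$ is the symmetric group on $\{0,1,\ldots,n-1\}$; ${\rm hd}(\sigma,\tau)=|\{x:\sigma(x)\neq\tau(x)\}|$. The contraction of $\sigma\in S_n$ is $\sigma^{\sf CT}\in S_{n-1}$ (on $\{0,\ldots,n-2\}$) defined by $\sigma^{\sf CT}(x)=\sigma(n-1)$ if $x=\sigma^{-1}(n-1)$ and $\sigma^{\sf CT}(x)=\sigma(x)$ otherwise (i.e. delete $n-1$ from the cycle notation of $\sigma$). *)

theory Defs
  imports "HOL-Combinatorics.Permutations"
begin

definition hd :: "nat \<Rightarrow> (nat \<Rightarrow> nat) \<Rightarrow> (nat \<Rightarrow> nat) \<Rightarrow> nat" where
  "hd n \<sigma> \<tau> = card {x \<in> {..<n}. \<sigma> x \<noteq> \<tau> x}"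

definition contraction :: "nat \<Rightarrow> (nat \<Rightarrow> nat) \<Rightarrow> (nat \<Rightarrow> nat)" where
  "contraction n \<sigma> = (\<lambda>x. if x < n - 1 then
       (if x = inv \<sigma> (n - 1) then \<sigma> (n - 1) else \<sigma> x) else x)"

end

(* Away from position n - 1 and from i and j, the contractions agree with sigma and tau,
   so Delta only depends on the mismatches at n - 1, i and j.  Evaluating them gives
   Delta = 0 if i = j and Delta = 2 + [c ~= e] - [a ~= c] - [b ~= e] otherwise.
   Injectivity of sigma and tau links the parameters (a = n - 1 and b = n - 1 iff i = j,
   c = n - 1 and a = e iff i = n - 1, e = n - 1 and b = c iff j = n - 1), and under these
   relations the formula splits into the listed cases. *)

theory Submission
  imports Defs
begin

lemma hd_Suc: "hd (Suc m) f g = hd m f g + of_bool (f m \<noteq> g m)"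
proof -
  have "{x \<in> {..<Suc m}. f x \<noteq> g x} =
        (if f m = g m then {x \<in> {..<m}. f x \<noteq> g x} else insert m {x \<in> {..<m}. f x \<noteq> g x})"
    by (auto simp: less_Suc_eq)
  then show ?thesis
    unfolding hd_def by simp
qed

lemma hd_diff_eq_sum:
  assumes "K \<subseteq> {..<m}"
    and "\<And>x. x < m \<Longrightarrow> x \<notin> K \<Longrightarrow> (f x \<noteq> g x) = (f' x \<noteq> g' x)"
  shows "int (hd m f g) - int (hd m f' g') =
         (\<Sum>x\<in>K. of_bool (f x \<noteq> g x) - of_bool (f' x \<noteq> g' x))"
proof -
  have card_eq_sum: "int (hd m f g) = (\<Sum>x<m. of_bool (f x \<noteq> g x))" for f g :: "nat \<Rightarrow> nat"
    unfolding hd_def by (simp add: sum.inter_filter[symmetric] Int_def)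
  have outside: "(\<Sum>x\<in>{..<m} - K. of_bool (f x \<noteq> g x) :: int) =
                 (\<Sum>x\<in>{..<m} - K. of_bool (f' x \<noteq> g' x))"
    using assms(2) by (intro sum.cong) auto
  show ?thesis
    unfolding card_eq_sum sum_subtractf[symmetric]
    using sum.subset_diff[OF assms(1), of "\<lambda>x. of_bool (f x \<noteq> g x) - of_bool (f' x \<noteq> g' x) :: int"]
      outside by (simp add: sum_subtractf)
qed

lemma contraction_apply:
  "x < n - 1 \<Longrightarrow> x \<noteq> inv \<sigma> (n - 1) \<Longrightarrow> contraction n \<sigma> x = \<sigma> x"
  unfolding contraction_def by simp

lemma contraction_apply_inv:
  "inv \<sigma> (n - 1) < n - 1 \<Longrightarrow> contraction n \<sigma> (inv \<sigma> (n - 1)) = \<sigma> (n - 1)"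
  unfolding contraction_def by simp

lemma hd_sub_hd_contraction_eq_sum:
  "int (hd (Suc N) \<sigma> \<tau>) - int (hd N (contraction (Suc N) \<sigma>) (contraction (Suc N) \<tau>)) =
   of_bool (\<sigma> N \<noteq> \<tau> N) +
   (\<Sum>x\<in>{inv \<sigma> N, inv \<tau> N} \<inter> {..<N}.
      of_bool (\<sigma> x \<noteq> \<tau> x) - of_bool (contraction (Suc N) \<sigma> x \<noteq> contraction (Suc N) \<tau> x))"
proof -
  have "int (hd N \<sigma> \<tau>) - int (hd N (contraction (Suc N) \<sigma>) (contraction (Suc N) \<tau>)) =
        (\<Sum>x\<in>{inv \<sigma> N, inv \<tau> N} \<inter> {..<N}.
           of_bool (\<sigma> x \<noteq> \<tau> x) - of_bool (contraction (Suc N) \<sigma> x \<noteq> contraction (Suc N) \<tau> x))"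
    by (rule hd_diff_eq_sum) (auto simp: contraction_apply)
  then show ?thesis
    by (simp add: hd_Suc)
qed

lemma hd_sub_hd_contraction:
  assumes "\<sigma> permutes {..<Suc N}" and "\<tau> permutes {..<Suc N}"
  defines "i \<equiv> inv \<sigma> N" and "j \<equiv> inv \<tau> N"
  shows "int (hd (Suc N) \<sigma> \<tau>) - int (hd N (contraction (Suc N) \<sigma>) (contraction (Suc N) \<tau>)) =
    (if i = j then 0
     else 2 + of_bool (\<sigma> N \<noteq> \<tau> N) - of_bool (\<tau> i \<noteq> \<sigma> N) - of_bool (\<sigma> j \<noteq> \<tau> N))"
proof -
  have diff: "int (hd (Suc N) \<sigma> \<tau>) - int (hd N (contraction (Suc N) \<sigma>) (contraction (Suc N) \<tau>)) =
    of_bool (\<sigma> N \<noteq> \<tau> N) + (\<Sum>x\<in>{i, j} \<inter> {..<N}.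
      of_bool (\<sigma> x \<noteq> \<tau> x) - of_bool (contraction (Suc N) \<sigma> x \<noteq> contraction (Suc N) \<tau> x))"
    unfolding i_def j_def by (rule hd_sub_hd_contraction_eq_sum)
  have "i \<le> N" "j \<le> N"
    unfolding i_def j_def
    using permutes_in_image[OF permutes_inv[OF assms(1)], of N]
      permutes_in_image[OF permutes_inv[OF assms(2)], of N] by auto
  have \<sigma>i: "\<sigma> i = N" and \<tau>j: "\<tau> j = N"
    unfolding i_def j_def using assms by (auto simp: permutes_inverses)
  have \<sigma>_eq: "\<sigma> x = \<sigma> y \<longleftrightarrow> x = y" and \<tau>_eq: "\<tau> x = \<tau> y \<longleftrightarrow> x = y" for x y
    using assms by (auto dest: permutes_inj simp: inj_eq)
  have \<sigma>'i: "contraction (Suc N) \<sigma> i = \<sigma> N" if "i < N"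
    using contraction_apply_inv[of \<sigma> "Suc N"] that unfolding i_def by simp
  have \<tau>'j: "contraction (Suc N) \<tau> j = \<tau> N" if "j < N"
    using contraction_apply_inv[of \<tau> "Suc N"] that unfolding j_def by simp
  have \<sigma>'x: "contraction (Suc N) \<sigma> x = \<sigma> x" if "x < N" "x \<noteq> i" for x
    using that contraction_apply[of x "Suc N"] unfolding i_def by simp
  have \<tau>'x: "contraction (Suc N) \<tau> x = \<tau> x" if "x < N" "x \<noteq> j" for x
    using that contraction_apply[of x "Suc N"] unfolding j_def by simp
  consider "i = j" "i = N" | "i = j" "i < N" | "i \<noteq> j" "i < N" "j < N"
    | "i \<noteq> j" "i = N" "j < N" | "i \<noteq> j" "j = N" "i < N"
    using \<open>i \<le> N\<close> \<open>j \<le> N\<close> by linarith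
  then show ?thesis
  proof cases
    case 1
    then show ?thesis using diff \<sigma>i \<tau>j by simp
  next
    case 2
    then show ?thesis using diff \<sigma>i \<tau>j \<sigma>'i \<tau>'j by simp
  next
    case 3
    then show ?thesis
      using diff \<sigma>i \<tau>j \<sigma>'i \<tau>'j \<sigma>'x[of j] \<tau>'x[of i] \<sigma>_eq[of j i] \<tau>_eq[of i j] by auto
  next
    case 4
    then show ?thesis
      using diff \<sigma>i \<tau>j \<tau>'j \<sigma>'x[of j] \<sigma>_eq[of j i] \<tau>_eq[of N j] by auto
  next
    case 5
    then show ?thesis
      using diff \<sigma>i \<tau>j \<sigma>'i \<tau>'x[of i] \<sigma>_eq[of N i] \<tau>_eq[of i j] by auto
  qed
qed

theorem proposition4p2:
  fixes n :: nat and \<sigma> \<tau> :: "nat \<Rightarrow> nat"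
  assumes "n \<ge> 2" and "\<sigma> permutes {..<n}" and "\<tau> permutes {..<n}"
  defines "i \<equiv> inv \<sigma> (n - 1)" and "j \<equiv> inv \<tau> (n - 1)"
      and "a \<equiv> \<tau> (inv \<sigma> (n - 1))" and "b \<equiv> \<sigma> (inv \<tau> (n - 1))" and "c \<equiv> \<sigma> (n - 1)" and "e \<equiv> \<tau> (n - 1)"
      and "\<Delta> \<equiv> int (hd n \<sigma> \<tau>) - int (hd (n - 1) (contraction n \<sigma>) (contraction n \<tau>))"
  shows "(\<Delta> = 0 \<longleftrightarrow>
            (distinct [i, j, n - 1] \<and> a \<noteq> b \<and> c = e) \<or>
            (distinct [i, j, n - 1] \<and> a = b \<and> c = e) \<or>
            (i = j \<and> j \<noteq> n - 1 \<and> a = n - 1 \<and> b = n - 1 \<and> c \<noteq> e) \<or>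
            (i = j \<and> j \<noteq> n - 1 \<and> a = n - 1 \<and> b = n - 1 \<and> c = e) \<or>
            (i = n - 1 \<and> j = n - 1 \<and> a = n - 1 \<and> b = n - 1 \<and> c = n - 1 \<and> e = n - 1))
       \<and> (\<Delta> = 1 \<longleftrightarrow>
            (distinct [i, j, n - 1] \<and> distinct [a, b, c, e]) \<or>
            (distinct [i, j, n - 1] \<and> a = b \<and> c \<noteq> e) \<or>
            (i = n - 1 \<and> n - 1 \<noteq> j \<and> a = e \<and> c = n - 1 \<and> distinct [a, b, n - 1]) \<or>
            (j = n - 1 \<and> n - 1 \<noteq> i \<and> b = c \<and> e = n - 1 \<and> distinct [a, b, n - 1]))
       \<and> (\<Delta> = 2 \<longleftrightarrow>
            (distinct [i, j, n - 1] \<and> a = c \<and> b \<noteq> e) \<or>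
            (distinct [i, j, n - 1] \<and> a \<noteq> c \<and> b = e) \<or>
            (i = n - 1 \<and> n - 1 \<noteq> j \<and> a = b \<and> b = e \<and> e \<noteq> c \<and> c = n - 1) \<or>
            (j = n - 1 \<and> n - 1 \<noteq> i \<and> a = b \<and> b = c \<and> c \<noteq> e \<and> e = n - 1))
       \<and> (\<Delta> = 3 \<longleftrightarrow> distinct [i, j, n - 1] \<and> a = c \<and> b = e)"
proof -
  obtain N where n: "n = Suc N"
    using assms(1) by (cases n) auto
  have \<sigma>: "\<sigma> permutes {..<Suc N}" and \<tau>: "\<tau> permutes {..<Suc N}"
    using assms(2,3) n by simp_all
  have \<Delta>: "\<Delta> = (if i = j then 0 else 2 + of_bool (c \<noteq> e) - of_bool (a \<noteq> c) - of_bool (b \<noteq> e))"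
    using hd_sub_hd_contraction[OF \<sigma> \<tau>]
    unfolding \<Delta>_def i_def j_def a_def b_def c_def e_def n by (simp add: eq_commute)
  have \<sigma>i: "\<sigma> i = n - 1" and \<tau>j: "\<tau> j = n - 1"
    unfolding i_def j_def by (simp_all add: permutes_inverses[OF assms(2)] permutes_inverses[OF assms(3)])
  have \<sigma>_eq: "\<sigma> x = \<sigma> y \<longleftrightarrow> x = y" and \<tau>_eq: "\<tau> x = \<tau> y \<longleftrightarrow> x = y" for x y
    using assms(2,3) by (auto dest: permutes_inj simp: inj_eq)
  have "a = n - 1 \<longleftrightarrow> i = j" "b = n - 1 \<longleftrightarrow> i = j" "c = n - 1 \<longleftrightarrow> i = n - 1"
    "e = n - 1 \<longleftrightarrow> j = n - 1" "a = e \<longleftrightarrow> i = n - 1" "b = c \<longleftrightarrow> j = n - 1"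
    unfolding a_def b_def c_def e_def i_def[symmetric] j_def[symmetric]
    using \<sigma>_eq \<tau>_eq \<sigma>i \<tau>j by metis+
  then show ?thesis
    unfolding \<Delta> by auto
qed

end
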